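(* Let $w\in\mathbb{R}^n$ with $w\ge0$, $W=ww^\top$, and integers $p,q\in\{1,\dots,n\}$, $r=pq$. Then the optimal value of the linear program $$\max\ \sum_{i=1}^n\sum_{j=1}^n W_{ij}t_{ij}\ \text{ s.t. }\ \sum_{j=1}^n t_{ij}\le q\ (\forall i),\ \sum_{i=1}^n t_{ij}\le p\ (\forall j),\ \sum_{i,j}t_{ij}\le r,\ 0\le t_{ij}\le1\ (\forall i,j)$$ equals $\sum_{i=1}^p\sum_{j=1}^q w_{[i]}w_{[j]}$.
   Context: $w_{[i]}$ denotes the $i$-th largest entry of $w$. *)

theory Defs
  imports Complex_Main
begin

text \<open>Vectors in R^n are represented as functions nat => real on indices 0..n-1.
  largest_entry w n k is the (k+1)-th largest entry of (w 0, ..., w (n-1)),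
  i.e. w_[k+1] in the paper's 1-based notation.\<close>
definition largest_entry :: "(nat \<Rightarrow> real) \<Rightarrow> nat \<Rightarrow> nat \<Rightarrow> real" where
  "largest_entry w n k = rev (sort (map w [0..<n])) ! k"

definition lp_feasible :: "nat \<Rightarrow> nat \<Rightarrow> nat \<Rightarrow> (nat \<Rightarrow> nat \<Rightarrow> real) \<Rightarrow> bool" where
  "lp_feasible n p q t \<longleftrightarrow>
     (\<forall>i<n. (\<Sum>j<n. t i j) \<le> real q) \<and>
     (\<forall>j<n. (\<Sum>i<n. t i j) \<le> real p) \<and>
     (\<Sum>i<n. \<Sum>j<n. t i j) \<le> real (p * q) \<and>
     (\<forall>i<n. \<forall>j<n. 0 \<le> t i j \<and> t i j \<le> 1)"

definition lp_objective :: "nat \<Rightarrow> (nat \<Rightarrow> real) \<Rightarrow> (nat \<Rightarrow> nat \<Rightarrow> real) \<Rightarrow> real" where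
  "lp_objective n w t = (\<Sum>i<n. \<Sum>j<n. (w i * w j) * t i j)"

end

theory Submission
  imports Defs "HOL-Library.Multiset"
begin

text \<open>Maximising \<open>\<Sum> a\<^sub>i x\<^sub>i\<close> over \<open>0 \<le> x\<^sub>i \<le> c\<close> with \<open>\<Sum> x\<^sub>i \<le> k c\<close> and
  \<open>a \<ge> 0\<close> gives at most \<open>c\<close> times the sum of the \<open>k\<close> largest \<open>a\<^sub>i\<close>: compare every term
  with the threshold value \<open>a\<^sub>[\<^sub>k\<^sub>]\<close>. Applied to a row of a feasible \<open>t\<close> this bounds the
  row value \<open>\<Sum>\<^sub>j w\<^sub>j t\<^sub>i\<^sub>j\<close> by \<open>w\<^sub>[\<^sub>1\<^sub>] + \<dots> + w\<^sub>[\<^sub>q\<^sub>]\<close>; applied to the column sums it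
  bounds the total of the row values by \<open>p\<close> times that; a third application, to the
  row values themselves, bounds the objective by the product of the two partial sums.
  The 0/1 matrix supported on the \<open>p \<times> q\<close> block of the largest entries attains it.\<close>

lemma sort_map_eq_map_sort_key: "sort (map f xs) = map f (sort_key f xs)"
  by (rule properties_for_sort) (simp_all add: mset_map)

definition decreasing_order :: "(nat \<Rightarrow> real) \<Rightarrow> nat \<Rightarrow> nat list" where
  "decreasing_order w n = rev (sort_key w [0..<n])"

lemma distinct_decreasing_order: "distinct (decreasing_order w n)"
  and set_decreasing_order: "set (decreasing_order w n) = {..<n}"
  and length_decreasing_order: "length (decreasing_order w n) = n"
  by (auto simp: decreasing_order_def)

lemma bij_betw_nth_decreasing_order: "bij_betw ((!) (decreasing_order w n)) {..<n} {..<n}"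
  by (rule bij_betw_nth)
    (auto simp: distinct_decreasing_order set_decreasing_order length_decreasing_order)

lemma largest_entry_eq_nth_decreasing_order:
  "k < n \<Longrightarrow> largest_entry w n k = w (decreasing_order w n ! k)"
  by (simp add: largest_entry_def decreasing_order_def sort_map_eq_map_sort_key rev_map)

lemma largest_entry_antimono:
  "i \<le> j \<Longrightarrow> j < n \<Longrightarrow> largest_entry w n j \<le> largest_entry w n i"
  unfolding largest_entry_def by (simp add: rev_nth sorted_nth_mono)

lemma sum_reindex_decreasing_order:
  "(\<Sum>i<n. f i) = (\<Sum>m<n. f (decreasing_order w n ! m))"
  using bij_betw_nth_decreasing_order[of w n] by (simp add: sum.reindex_bij_betw)

lemma antimono_weight_le_threshold:
  fixes a x :: "nat \<Rightarrow> real"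
  assumes anti: "\<And>i j. i \<le> j \<Longrightarrow> j < n \<Longrightarrow> a j \<le> a i"
    and x: "0 \<le> x i" "x i \<le> c" and "i < n" "k \<le> n"
  shows "a i * x i - of_bool (i < k) * c * a i \<le> a (k - 1) * (x i - of_bool (i < k) * c)"
proof (cases "i < k")
  case True
  then have "0 \<le> (a i - a (k - 1)) * (c - x i)"
    using anti[of i "k - 1"] x \<open>k \<le> n\<close> by simp
  with True show ?thesis by (simp add: algebra_simps)
next
  case False
  then have "a i \<le> a (k - 1)" using anti[of "k - 1" i] \<open>i < n\<close> by simp
  with False x show ?thesis by (simp add: mult_right_mono)
qed

lemma weighted_sum_le_sum_prefix:
  fixes a x :: "nat \<Rightarrow> real"
  assumes anti: "\<And>i j. i \<le> j \<Longrightarrow> j < n \<Longrightarrow> a j \<le> a i"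
    and nonneg: "\<And>i. i < n \<Longrightarrow> 0 \<le> a i"
    and x: "\<And>i. i < n \<Longrightarrow> 0 \<le> x i \<and> x i \<le> c"
    and sum_x: "(\<Sum>i<n. x i) \<le> real k * c" and "k \<le> n"
  shows "(\<Sum>i<n. a i * x i) \<le> c * (\<Sum>i<k. a i)"
proof (cases "n = 0")
  case True
  with \<open>k \<le> n\<close> show ?thesis by simp
next
  case False
  \<comment> \<open>For \<open>k = 0\<close> the threshold \<open>a (k - 1)\<close> is \<open>a 0\<close>, which still dominates every \<open>a i\<close>.\<close>
  have "0 \<le> a (k - 1)" using nonneg \<open>k \<le> n\<close> False by simp
  have prefix: "{..<n} \<inter> {i. i < k} = {..<k}" using \<open>k \<le> n\<close> by auto
  have "(\<Sum>i<n. a i * x i) - c * (\<Sum>i<k. a i)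
      = (\<Sum>i<n. a i * x i - of_bool (i < k) * c * a i)"
    by (simp add: sum_subtractf sum_distrib_left mult.assoc prefix)
  also have "\<dots> \<le> (\<Sum>i<n. a (k - 1) * (x i - of_bool (i < k) * c))"
    using antimono_weight_le_threshold[of n a x _ c k] anti x \<open>k \<le> n\<close>
    by (intro sum_mono) auto
  also have "\<dots> = a (k - 1) * ((\<Sum>i<n. x i) - real k * c)"
    by (simp add: sum_subtractf right_diff_distrib sum_distrib_left[symmetric] prefix)
  also have "\<dots> \<le> 0"
    using \<open>0 \<le> a (k - 1)\<close> sum_x by (simp add: mult_nonneg_nonpos)
  finally show ?thesis by simp
qed

lemma nth_decreasing_order_less: "m < n \<Longrightarrow> decreasing_order w n ! m < n"
  using nth_mem[of m "decreasing_order w n"]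
  by (simp add: set_decreasing_order length_decreasing_order)

lemma weighted_sum_le_largest_entries:
  fixes w x :: "nat \<Rightarrow> real"
  assumes w: "\<forall>i<n. 0 \<le> w i"
    and x: "\<And>i. i < n \<Longrightarrow> 0 \<le> x i \<and> x i \<le> c"
    and sum_x: "(\<Sum>i<n. x i) \<le> real k * c" and "k \<le> n"
  shows "(\<Sum>i<n. w i * x i) \<le> c * (\<Sum>m<k. largest_entry w n m)"
proof -
  let ?\<sigma> = "(!) (decreasing_order w n)"
  have "(\<Sum>i<n. w i * x i) = (\<Sum>m<n. w (?\<sigma> m) * x (?\<sigma> m))"
    by (rule sum_reindex_decreasing_order)
  also have "\<dots> = (\<Sum>m<n. largest_entry w n m * x (?\<sigma> m))"
    by (simp add: largest_entry_eq_nth_decreasing_order)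
  also have "\<dots> \<le> c * (\<Sum>m<k. largest_entry w n m)"
  proof (rule weighted_sum_le_sum_prefix)
    show "(\<Sum>m<n. x (?\<sigma> m)) \<le> real k * c"
      using sum_x by (simp flip: sum_reindex_decreasing_order)
  qed (use largest_entry_antimono largest_entry_eq_nth_decreasing_order
      nth_decreasing_order_less w x \<open>k \<le> n\<close> in auto)
  finally show ?thesis .
qed

definition top_indices :: "(nat \<Rightarrow> real) \<Rightarrow> nat \<Rightarrow> nat \<Rightarrow> nat set" where
  "top_indices w n k = (!) (decreasing_order w n) ` {..<k}"

lemma top_indices_subset: "k \<le> n \<Longrightarrow> top_indices w n k \<subseteq> {..<n}"
  by (auto simp: top_indices_def nth_decreasing_order_less)

lemma inj_on_nth_decreasing_order: "k \<le> n \<Longrightarrow> inj_on ((!) (decreasing_order w n)) {..<k}"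
  using bij_betw_imp_inj_on[OF bij_betw_nth_decreasing_order] by (rule inj_on_subset) auto

lemma card_top_indices: "k \<le> n \<Longrightarrow> card (top_indices w n k) = k"
  by (simp add: top_indices_def card_image inj_on_nth_decreasing_order)

lemma sum_top_indices:
  "k \<le> n \<Longrightarrow> (\<Sum>i\<in>top_indices w n k. w i) = (\<Sum>m<k. largest_entry w n m)"
  by (simp add: top_indices_def sum.reindex inj_on_nth_decreasing_order
      largest_entry_eq_nth_decreasing_order)

lemma sum_mult_of_bool_mem:
  fixes f :: "nat \<Rightarrow> 'a :: semiring_1"
  assumes "A \<subseteq> {..<n::nat}"
  shows "(\<Sum>i<n. f i * of_bool (i \<in> A)) = sum f A"
proof -
  have "{..<n} \<inter> {i. i \<in> A} = A" using assms by auto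
  then show ?thesis by simp
qed

lemma sum_of_bool_mem:
  assumes "A \<subseteq> {..<n::nat}"
  shows "(\<Sum>i<n. of_bool (i \<in> A)) = (of_nat (card A) :: 'a :: semiring_1)"
proof -
  have "{..<n} \<inter> {i. i \<in> A} = A" using assms by auto
  then show ?thesis by simp
qed

lemma lp_feasible_indicator_product:
  assumes "P \<subseteq> {..<n}" "Q \<subseteq> {..<n}" "card P = p" "card Q = q"
  shows "lp_feasible n p q (\<lambda>i j. of_bool (i \<in> P) * of_bool (j \<in> Q))"
proof -
  have rows: "(\<Sum>j<n. of_bool (i \<in> P) * of_bool (j \<in> Q)) = of_bool (i \<in> P) * real q" for i
    using sum_of_bool_mem[OF assms(2), where 'a=real] assms(4) by (simp del: sum_of_bool_eq flip: sum_distrib_left)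
  have cols: "(\<Sum>i<n. of_bool (i \<in> P) * of_bool (j \<in> Q)) = real p * of_bool (j \<in> Q)" for j
    using sum_of_bool_mem[OF assms(1), where 'a=real] assms(3) by (simp del: sum_of_bool_eq flip: sum_distrib_right)
  have total: "(\<Sum>i<n. \<Sum>j<n. of_bool (i \<in> P) * of_bool (j \<in> Q)) = real p * real q"
    using sum_of_bool_mem[OF assms(1), where 'a=real] assms(3)
    by (simp only: rows flip: sum_distrib_right)
  show ?thesis
    using rows cols total
    by (simp add: lp_feasible_def del: sum_of_bool_eq sum_mult_of_bool_eq sum_of_bool_mult_eq)
qed

lemma lp_objective_indicator_product:
  assumes "P \<subseteq> {..<n}" "Q \<subseteq> {..<n}"
  shows "lp_objective n w (\<lambda>i j. of_bool (i \<in> P) * of_bool (j \<in> Q))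
    = (\<Sum>i\<in>P. w i) * (\<Sum>j\<in>Q. w j)"
proof -
  have "lp_objective n w (\<lambda>i j. of_bool (i \<in> P) * of_bool (j \<in> Q))
      = (\<Sum>i<n. \<Sum>j<n. (w i * of_bool (i \<in> P)) * (w j * of_bool (j \<in> Q)))"
    unfolding lp_objective_def by (intro sum.cong refl) (simp add: algebra_simps)
  also have "\<dots> = (\<Sum>i<n. w i * of_bool (i \<in> P)) * (\<Sum>j<n. w j * of_bool (j \<in> Q))"
    by (rule sum_product[symmetric])
  finally show ?thesis by (simp only: sum_mult_of_bool_mem assms)
qed

lemma lp_objective_le_product_largest_entries:
  assumes w: "\<forall>i<n. 0 \<le> w i" and "lp_feasible n p q t" "p \<le> n" "q \<le> n"
  shows "lp_objective n w t \<le> (\<Sum>m<p. largest_entry w n m) * (\<Sum>m<q. largest_entry w n m)"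
proof -
  let ?S = "\<lambda>k. \<Sum>m<k. largest_entry w n m"
  define r where "r i = (\<Sum>j<n. w j * t i j)" for i
  from \<open>lp_feasible n p q t\<close> have
        row: "\<And>i. i < n \<Longrightarrow> (\<Sum>j<n. t i j) \<le> real q"
    and col: "\<And>j. j < n \<Longrightarrow> (\<Sum>i<n. t i j) \<le> real p"
    and total: "(\<Sum>i<n. \<Sum>j<n. t i j) \<le> real (p * q)"
    and entry: "\<And>i j. i < n \<Longrightarrow> j < n \<Longrightarrow> 0 \<le> t i j \<and> t i j \<le> 1"
    unfolding lp_feasible_def by auto
  have r_bounds: "0 \<le> r i \<and> r i \<le> ?S q" if "i < n" for i
  proof
    show "0 \<le> r i" unfolding r_def using w entry that by (intro sum_nonneg) auto
    show "r i \<le> ?S q"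
      using weighted_sum_le_largest_entries[OF w, of "t i" 1 q] entry row that \<open>q \<le> n\<close>
      unfolding r_def by simp
  qed
  have "(\<Sum>i<n. r i) = (\<Sum>j<n. w j * (\<Sum>i<n. t i j))"
    unfolding r_def by (subst sum.swap) (simp add: sum_distrib_left)
  also have "\<dots> \<le> real p * ?S q"
  proof (rule weighted_sum_le_largest_entries[OF w])
    show "0 \<le> (\<Sum>i<n. t i j) \<and> (\<Sum>i<n. t i j) \<le> real p" if "j < n" for j
      using col[OF that] entry that by (auto intro: sum_nonneg)
    show "(\<Sum>j<n. \<Sum>i<n. t i j) \<le> real q * real p"
      using total by (subst sum.swap) (simp add: mult.commute)
  qed fact
  finally have "(\<Sum>i<n. w i * r i) \<le> ?S q * ?S p"
    using weighted_sum_le_largest_entries[OF w, of r "?S q" p] r_bounds \<open>p \<le> n\<close>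
    by (simp add: mult.commute)
  moreover have "lp_objective n w t = (\<Sum>i<n. w i * r i)"
    unfolding lp_objective_def r_def by (simp add: sum_distrib_left mult.assoc)
  ultimately show ?thesis by (simp add: mult.commute)
qed

theorem mainTheorem18:
  fixes n p q :: nat and w :: "nat \<Rightarrow> real"
  assumes "\<forall>i<n. 0 \<le> w i"
    and "1 \<le> p" "p \<le> n" and "1 \<le> q" "q \<le> n"
  shows "(\<exists>t. lp_feasible n p q t \<and>
            lp_objective n w t = (\<Sum>i<p. \<Sum>j<q. largest_entry w n i * largest_entry w n j))
       \<and> (\<forall>t. lp_feasible n p q t \<longrightarrow>
            lp_objective n w t \<le> (\<Sum>i<p. \<Sum>j<q. largest_entry w n i * largest_entry w n j))"
proof -
  let ?P = "top_indices w n p" and ?Q = "top_indices w n q"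
  let ?t = "\<lambda>i j. of_bool (i \<in> ?P) * of_bool (j \<in> ?Q) :: real"
  have optimum: "(\<Sum>i<p. \<Sum>j<q. largest_entry w n i * largest_entry w n j)
      = (\<Sum>m<p. largest_entry w n m) * (\<Sum>m<q. largest_entry w n m)"
    by (rule sum_product[symmetric])
  have subsets: "?P \<subseteq> {..<n}" "?Q \<subseteq> {..<n}"
    using assms(3,5) by (simp_all add: top_indices_subset)
  have "lp_feasible n p q ?t"
    using subsets assms(3,5) by (simp add: lp_feasible_indicator_product card_top_indices)
  moreover have "lp_objective n w ?t
      = (\<Sum>i<p. \<Sum>j<q. largest_entry w n i * largest_entry w n j)"
    using subsets assms(3,5)
    by (simp add: lp_objective_indicator_product sum_top_indices optimum)
  moreover have "lp_objective n w t \<le> (\<Sum>i<p. \<Sum>j<q. largest_entry w n i * largest_entry w n j)"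
    if "lp_feasible n p q t" for t
    using lp_objective_le_product_largest_entries[OF assms(1) that assms(3,5)] optimum by simp
  ultimately show ?thesis by blast
qed

end
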